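(* Let $(\mathbb S,+,\cdot)$ be a Commutative S-Structure which is Wheel Distributive and satisfies $0\in\mathbb S_0$. Then $(\mathbb S,+,\cdot)$ is Coordinated.
   Context: An S-Structure is a triple $(\mathbb S,+,\cdot)$ where $\mathbb S$ is a set and $+,\cdot$ are binary operations on $\mathbb S$ such that: $(\mathbb S,+)$ is a commutative group with identity $0$ (the inverse of $s$ is written $-s$, and $s-t:=s+(-t)$); $\mathbb S$ is closed under $\cdot$; and there exists $s\in\mathbb S$ with $0\cdot s\neq 0$ or $s\cdot 0\neq 0$. Multiplication binds tighter than addition. It is Commutative if $s\cdot t=t\cdot s$ for all $s,t\in\mathbb S$. For a Commutative S-Structure and $\alpha\in\mathbb S$, put $\mathbb S_\alpha=\{s\in\mathbb S:0\cdot s=s\cdot 0=\alpha\}$ and $\Lambda=\{\alpha\in\mathbb S:\mathbb S_\alpha\neq\emptyset\}$. The structure is Wheel Distributive if $s\cdot(t+r)+(s\cdot 0)=(s\cdot t)+(s\cdot r)$ for all $s,t,r\in\mathbb S$. If $\mathbb S_0\neq\emptyset$ and $\alpha\in\Lambda$, an element $q\in\mathbb S_\alpha$ is a Base for $\mathbb S_\alpha$ if (1) $q+\beta\in\mathbb S_\alpha$ for every $\beta\in\mathbb S_0$, and (2) every $s\in\mathbb S_\alpha$ can be written $s=q+\beta$ for some $\beta\in\mathbb S_0$. The structure is Coordinated if $\mathbb S_0\neq\emptyset$ and for every $\alpha\in\Lambda$ there exists a Base for $\mathbb S_\alpha$. *)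

theory Defs
  imports Main
begin

definition S_structure :: "('a::ab_group_add \<Rightarrow> 'a \<Rightarrow> 'a) \<Rightarrow> bool" where
  "S_structure mul \<longleftrightarrow> (\<exists>s. mul 0 s \<noteq> 0 \<or> mul s 0 \<noteq> 0)"

definition S_commutative :: "('a \<Rightarrow> 'a \<Rightarrow> 'a) \<Rightarrow> bool" where
  "S_commutative mul \<longleftrightarrow> (\<forall>s t. mul s t = mul t s)"

definition S_alpha :: "('a::ab_group_add \<Rightarrow> 'a \<Rightarrow> 'a) \<Rightarrow> 'a \<Rightarrow> 'a set" where
  "S_alpha mul \<alpha> = {s. mul 0 s = \<alpha> \<and> mul s 0 = \<alpha>}"

definition S_Lambda :: "('a::ab_group_add \<Rightarrow> 'a \<Rightarrow> 'a) \<Rightarrow> 'a set" where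
  "S_Lambda mul = {\<alpha>. S_alpha mul \<alpha> \<noteq> {}}"

definition wheel_distributive :: "('a::ab_group_add \<Rightarrow> 'a \<Rightarrow> 'a) \<Rightarrow> bool" where
  "wheel_distributive mul \<longleftrightarrow>
     (\<forall>s t r. mul s (t + r) + mul s 0 = mul s t + mul s r)"

definition is_base :: "('a::ab_group_add \<Rightarrow> 'a \<Rightarrow> 'a) \<Rightarrow> 'a \<Rightarrow> 'a \<Rightarrow> bool" where
  "is_base mul \<alpha> q \<longleftrightarrow> q \<in> S_alpha mul \<alpha> \<and>
     (\<forall>\<beta>\<in>S_alpha mul 0. q + \<beta> \<in> S_alpha mul \<alpha>) \<and>
     (\<forall>s\<in>S_alpha mul \<alpha>. \<exists>\<beta>\<in>S_alpha mul 0. s = q + \<beta>)"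

definition coordinated :: "('a::ab_group_add \<Rightarrow> 'a \<Rightarrow> 'a) \<Rightarrow> bool" where
  "coordinated mul \<longleftrightarrow> S_alpha mul 0 \<noteq> {} \<and>
     (\<forall>\<alpha>\<in>S_Lambda mul. \<exists>q. is_base mul \<alpha> q)"

end

theory Submission
  imports Defs
begin

(* Wheel distributivity at s = 0, together with 0 * 0 = 0, makes t \<mapsto> 0 * t an
   endomorphism of the additive group, and by commutativity each S_\<alpha> is the fibre
   of this endomorphism over \<alpha>. Fibres of a group homomorphism are cosets of its
   kernel S_0, so every element of S_\<alpha> is a Base for S_\<alpha>. *)

lemma wheel_distributive_zero_additive:
  assumes "wheel_distributive mul" and "mul 0 0 = 0"
  shows "mul 0 (t + r) = mul 0 t + mul 0 r"
  using assms unfolding wheel_distributive_def by (metis add.right_neutral)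

lemma S_alpha_commutative:
  assumes "S_commutative mul"
  shows "S_alpha mul \<alpha> = {s. mul 0 s = \<alpha>}"
  using assms unfolding S_alpha_def S_commutative_def by metis

lemma is_base_of_additive_fibres:
  assumes additive: "\<And>t r. mul 0 (t + r) = mul 0 t + mul 0 r"
    and fibres: "\<And>\<alpha>. S_alpha mul \<alpha> = {s. mul 0 s = \<alpha>}"
    and q: "q \<in> S_alpha mul \<alpha>"
  shows "is_base mul \<alpha> q"
  unfolding is_base_def
proof (intro conjI ballI)
  fix \<beta> assume "\<beta> \<in> S_alpha mul 0"
  then show "q + \<beta> \<in> S_alpha mul \<alpha>" using q by (simp add: fibres additive)
next
  fix s assume s: "s \<in> S_alpha mul \<alpha>"
  have "mul 0 s = mul 0 (s - q) + mul 0 q"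
    using additive[of "s - q" q] by simp
  then have "s - q \<in> S_alpha mul 0" using s q by (simp add: fibres)
  then show "\<exists>\<beta>\<in>S_alpha mul 0. s = q + \<beta>" by (intro bexI[of _ "s - q"]) auto
qed (fact q)

theorem theorem2p4p1:
  fixes mul :: "'a::ab_group_add \<Rightarrow> 'a \<Rightarrow> 'a"
  assumes "S_structure mul"
    and "S_commutative mul"
    and "wheel_distributive mul"
    and "(0::'a) \<in> S_alpha mul 0"
  shows "coordinated mul"
proof -
  have "mul 0 0 = 0" using assms(4) by (simp add: S_alpha_def)
  with assms(3) have additive: "\<And>t r. mul 0 (t + r) = mul 0 t + mul 0 r"
    by (rule wheel_distributive_zero_additive)
  have fibres: "\<And>\<alpha>. S_alpha mul \<alpha> = {s. mul 0 s = \<alpha>}"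
    using assms(2) by (rule S_alpha_commutative)
  have "\<exists>q. is_base mul \<alpha> q" if "\<alpha> \<in> S_Lambda mul" for \<alpha>
    using that is_base_of_additive_fibres[OF additive fibres]
    unfolding S_Lambda_def by blast
  then show ?thesis
    using assms(4) unfolding coordinated_def by blast
qed

end
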